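(* Let $G$ be a finitely generated amenable group, $S$ a finite symmetric generating set, $\Gamma=\mathrm{Cay}(G,S)$, and $p\in(1,\infty)$. Let $(\xi_n)$ be a sequence of finitely supported probability measures on $G$ tending to a left-invariant mean, i.e. $\|\lambda_\gamma\xi_n-\xi_n\|_{\ell^1(G)}\to0$ for every $\gamma\in G$. If there is $K>0$ such that for all $s\in S$ and all $n$ the operator $f\mapsto(\delta_s-\delta_e)*\xi_n*f$ has norm at most $K$ as an operator from $D^p(\Gamma)$ to $\ell^p(G)$, then $\overline{\ell^p H}^1(\Gamma)=0$.
   Context: The Cayley graph $\Gamma=\mathrm{Cay}(G,S)$ has vertex set $G$ and edges $(\gamma,\gamma')$ with $s^{-1}\gamma=\gamma'$ for some $s\in S$. Functions take values in $\mathbb{K}=\mathbb{R}$ or $\mathbb{C}$. The gradient is $\nabla g(\gamma,\gamma')=g(\gamma')-g(\gamma)$; $D^p(\Gamma)=\{f:G\to\mathbb{K}:\nabla f\in\ell^p(E)\}$ with norm $\|f\|^p_{D^p}=\|\nabla f\|^p_{\ell^p(E)}+|f(e)|^p$, and $\overline{\ell^p H}^1(\Gamma)=D^p(\Gamma)/\overline{\ell^p(G)+\mathbb{K}}^{D^p}$ ($\mathbb{K}$ = constant functions). $(\lambda_\gamma f)(x)=f(\gamma^{-1}x)$; $\delta_\gamma$ is the Dirac mass at $\gamma$; convolution is $(\xi*f)(\eta)=\sum_{\gamma\in G}\xi(\gamma)f(\gamma^{-1}\eta)$. *)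

theory Defs
  imports "HOL-Analysis.Analysis"
begin

text \<open>The group G is a type of class group_add (written additively, not necessarily
commutative): x + y is the product, 0 the identity e, -x the inverse.
Scalars 'k are a complete real normed field (i.e. R or C).\<close>

definition generated_subgroup :: "'g::group_add set \<Rightarrow> 'g set" where
  "generated_subgroup S = \<Inter>{H. 0 \<in> H \<and> (\<forall>x\<in>H. \<forall>y\<in>H. x + y \<in> H) \<and> (\<forall>x\<in>H. - x \<in> H) \<and> S \<subseteq> H}"

definition finite_symmetric_generating_set :: "'g::group_add set \<Rightarrow> bool" where
  "finite_symmetric_generating_set S \<longleftrightarrow>
     finite S \<and> (\<forall>s\<in>S. - s \<in> S) \<and> generated_subgroup S = UNIV"

definition amenable_group :: "'g::group_add itself \<Rightarrow> bool" where
  "amenable_group TYPE('g) \<longleftrightarrow>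
    (\<exists>m :: ('g \<Rightarrow> real) \<Rightarrow> real.
       (\<forall>f g c. bounded (range f) \<and> bounded (range g) \<longrightarrow> m (\<lambda>x. f x + c * g x) = m f + c * m g)
     \<and> (\<forall>f. bounded (range f) \<and> (\<forall>x. f x \<ge> 0) \<longrightarrow> m f \<ge> 0)
     \<and> m (\<lambda>_. 1) = 1
     \<and> (\<forall>f \<gamma>. bounded (range f) \<longrightarrow> m (\<lambda>x. f (- \<gamma> + x)) = m f))"

definition cayley_edges :: "'g::group_add set \<Rightarrow> ('g \<times> 'g) set" where
  "cayley_edges S = {(\<gamma>, \<gamma>'). \<exists>s\<in>S. - s + \<gamma> = \<gamma>'}"

definition lp_space :: "real \<Rightarrow> ('g \<Rightarrow> 'k::real_normed_vector) set" where
  "lp_space p = {f. (\<lambda>x. norm (f x) powr p) summable_on UNIV}"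

definition lp_norm :: "real \<Rightarrow> ('g \<Rightarrow> 'k::real_normed_vector) \<Rightarrow> real" where
  "lp_norm p f = (\<Sum>\<^sub>\<infinity>x. norm (f x) powr p) powr (1 / p)"

definition Dp_space :: "real \<Rightarrow> 'g::group_add set \<Rightarrow> ('g \<Rightarrow> 'k::real_normed_vector) set" where
  "Dp_space p S = {f. (\<lambda>(x, y). norm (f y - f x) powr p) summable_on cayley_edges S}"

definition Dp_norm :: "real \<Rightarrow> 'g::group_add set \<Rightarrow> ('g \<Rightarrow> 'k::real_normed_vector) \<Rightarrow> real" where
  "Dp_norm p S f =
     ((\<Sum>\<^sub>\<infinity>(x, y)\<in>cayley_edges S. norm (f y - f x) powr p) + norm (f 0) powr p) powr (1 / p)"

definition lp_plus_const_closure :: "real \<Rightarrow> 'g::group_add set \<Rightarrow> ('g \<Rightarrow> 'k::real_normed_vector) set" where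
  "lp_plus_const_closure p S = {f \<in> Dp_space p S. \<forall>\<epsilon>>0. \<exists>g \<in> lp_space p. \<exists>c.
       Dp_norm p S (\<lambda>x. f x - (g x + c)) < \<epsilon>}"

definition reduced_lp_cohomology_vanishes :: "real \<Rightarrow> 'g::group_add set \<Rightarrow> 'k::real_normed_vector itself \<Rightarrow> bool" where
  "reduced_lp_cohomology_vanishes p S TYPE('k) \<longleftrightarrow>
     (Dp_space p S :: ('g \<Rightarrow> 'k) set) = lp_plus_const_closure p S"

definition conv :: "('g::group_add \<Rightarrow> real) \<Rightarrow> ('g \<Rightarrow> 'k::real_vector) \<Rightarrow> 'g \<Rightarrow> 'k" where
  "conv \<xi> f \<eta> = (\<Sum>\<gamma>\<in>{\<gamma>. \<xi> \<gamma> \<noteq> 0}. \<xi> \<gamma> *\<^sub>R f (- \<gamma> + \<eta>))"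

definition dirac :: "'g \<Rightarrow> 'g \<Rightarrow> real" where
  "dirac \<gamma> = (\<lambda>x. if x = \<gamma> then 1 else 0)"

definition finitely_supported_prob :: "('g \<Rightarrow> real) \<Rightarrow> bool" where
  "finitely_supported_prob \<xi> \<longleftrightarrow>
     (\<forall>x. \<xi> x \<ge> 0) \<and> finite {x. \<xi> x \<noteq> 0} \<and> (\<Sum>x\<in>{x. \<xi> x \<noteq> 0}. \<xi> x) = 1"

end

theory Submission
  imports Defs
begin

(*
  Fix f in D^p. Each \<xi>_n is a finitely supported probability measure and every difference
  f(\<gamma>\<^sup>-\<^sup>1 x) - f(x) is in \<ell>^p (this holds for the generators, and such \<gamma> form a subgroup), so
  f - \<xi>_n * f lies in \<ell>^p and it suffices to make the gradients of the \<xi>_n * f small in \<ell>^p.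
  Along the edges labelled s the gradient of \<xi>_n * f is (\<delta>_s - \<delta>_e) * \<xi>_n * f. By hypothesis these
  are bounded in \<ell>^p uniformly in n, and they tend to 0 pointwise: f is bounded up to an error
  that is small in D^p, and \<lambda>_s \<xi>_n - \<xi>_n tends to 0 in \<ell>^1. Since p > 1, a gliding hump argument
  turns a bounded, pointwise null sequence in \<ell>^p into Cesaro means of a subsequence with small
  \<ell>^p norm; averaging the corresponding \<xi>_n * f yields u with f - u in \<ell>^p and \<nabla>u small in \<ell>^p.
*)

lemma sum_powr_le_card_powr:
  fixes a :: "'i \<Rightarrow> real"
  assumes "finite A" "\<And>k. k \<in> A \<Longrightarrow> a k \<ge> 0" "p \<ge> 0"
  shows "(\<Sum>k\<in>A. a k) powr p \<le> real (card A) powr p * (\<Sum>k\<in>A. a k powr p)"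
proof (cases "A = {}")
  case False
  have "Max (a ` A) \<in> a ` A"
    using assms(1) False by (intro Max_in) auto
  then obtain k0 where k0: "k0 \<in> A" "a k0 = Max (a ` A)"
    by auto
  have "(\<Sum>k\<in>A. a k) \<le> real (card A) * a k0"
    using sum_bounded_above[of A a "a k0"] assms(1) k0 by simp
  then have "(\<Sum>k\<in>A. a k) powr p \<le> (real (card A) * a k0) powr p"
    using assms by (intro powr_mono2) (auto intro: sum_nonneg)
  also have "\<dots> = real (card A) powr p * a k0 powr p"
    using assms k0 by (simp add: powr_mult)
  also have "\<dots> \<le> real (card A) powr p * (\<Sum>k\<in>A. a k powr p)"
    using assms k0 member_le_sum[of k0 A "\<lambda>k. a k powr p"] by (intro mult_left_mono) auto
  finally show ?thesis .
qed simp

lemma norm_add_powr_le: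
  fixes a b :: "'a::real_normed_vector"
  assumes "p \<ge> 0"
  shows "norm (a + b) powr p \<le> 2 powr p * (norm a powr p + norm b powr p)"
proof -
  have "norm (a + b) powr p \<le> (norm a + norm b) powr p"
    by (intro powr_mono2 assms norm_triangle_ineq) auto
  also have "\<dots> \<le> 2 powr p * (norm a powr p + norm b powr p)"
    using sum_powr_le_card_powr[of "{False, True}" "\<lambda>b'. if b' then norm a else norm b" p] assms
    by (simp add: add.commute)
  finally show ?thesis .
qed

lemma norm_sum_powr_disjoint:
  fixes w :: "'k \<Rightarrow> 'a::real_normed_vector"
  assumes "finite A" "\<And>k j. k \<in> A \<Longrightarrow> j \<in> A \<Longrightarrow> k \<noteq> j \<Longrightarrow> w k = 0 \<or> w j = 0"
  shows "norm (\<Sum>k\<in>A. w k) powr p = (\<Sum>k\<in>A. norm (w k) powr p)"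
proof (cases "\<exists>k0\<in>A. w k0 \<noteq> 0")
  case True
  then obtain k0 where k0: "k0 \<in> A" "w k0 \<noteq> 0" by blast
  then have "w k = 0" if "k \<in> A - {k0}" for k
    using assms(2) that by blast
  then show ?thesis
    using k0 assms(1) by (simp add: sum.remove[of A k0])
qed simp

lemma has_sum_sum_fun:
  fixes f :: "'k \<Rightarrow> 'i \<Rightarrow> 'a::topological_comm_monoid_add"
  assumes "finite K" "\<And>k. k \<in> K \<Longrightarrow> (f k has_sum s k) A"
  shows "((\<lambda>x. \<Sum>k\<in>K. f k x) has_sum (\<Sum>k\<in>K. s k)) A"
  using assms by (induction K rule: finite_induct) (simp_all add: has_sum_add)

lemma infsum_tail_approximation:
  fixes g :: "'i \<Rightarrow> real"
  assumes "g summable_on I" "\<delta> > 0"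
  obtains G where "finite G" "G \<subseteq> I" "infsum g (I - G) < \<delta>"
proof -
  obtain G where G: "finite G" "G \<subseteq> I" "dist (sum g G) (infsum g I) \<le> \<delta> / 2"
    using infsum_finite_approximation[OF assms(1), of "\<delta> / 2"] assms(2) by auto
  have "g summable_on I - G"
    using assms(1) by (rule summable_on_subset_banach) auto
  then have "infsum g (G \<union> (I - G)) = infsum g G + infsum g (I - G)"
    using G(1) by (intro infsum_Un_disjoint) auto
  moreover have "G \<union> (I - G) = I"
    using G(2) by blast
  ultimately show ?thesis
    using G that assms(2) by (simp add: dist_real_def)
qed

lemma gliding_hump_selection:
  fixes g :: "nat \<Rightarrow> 'i \<Rightarrow> real"
  assumes nonneg: "\<And>n i. g n i \<ge> 0"
    and summable: "\<And>n. g n summable_on I"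
    and pointwise: "\<And>i. i \<in> I \<Longrightarrow> (\<lambda>n. g n i) \<longlonglongrightarrow> 0"
    and "\<delta> > 0"
  shows "\<exists>m :: nat \<Rightarrow> nat. \<exists>D. disjoint_family D \<and> (\<forall>k. infsum (g (m k)) (I - D k) < \<delta>)"
proof -
  have "\<exists>n. (\<Sum>i\<in>F. g n i) < \<delta> / 2" if "F \<subseteq> I" for F
  proof -
    have "(\<lambda>n. \<Sum>i\<in>F. g n i) \<longlonglongrightarrow> (\<Sum>i\<in>F. 0)"
      using pointwise that by (intro tendsto_sum) auto
    then have "\<forall>\<^sub>F n in sequentially. (\<Sum>i\<in>F. g n i) < \<delta> / 2"
      using \<open>\<delta> > 0\<close> by (intro order_tendstoD(2)) auto
    then show ?thesis
      by (meson eventually_sequentially order.refl)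
  qed
  then obtain head where head: "\<And>F. F \<subseteq> I \<Longrightarrow> (\<Sum>i\<in>F. g (head F) i) < \<delta> / 2"
    by metis
  have "\<exists>G. finite G \<and> G \<subseteq> I \<and> infsum (g n) (I - G) < \<delta> / 2" for n
    using infsum_tail_approximation[OF summable[of n], of "\<delta> / 2"] \<open>\<delta> > 0\<close> by auto
  then obtain body where body: "\<And>n. finite (body n)" "\<And>n. body n \<subseteq> I"
      "\<And>n. infsum (g n) (I - body n) < \<delta> / 2"
    by metis
  \<comment> \<open>\<open>F k\<close> holds the bulk of the first \<open>k\<close> selected functions;
    the next one is chosen small on \<open>F k\<close>.\<close>
  define F where "F = rec_nat {} (\<lambda>_ A. A \<union> body (head A))"
  have F_Suc: "F (Suc k) = F k \<union> body (head (F k))" for k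
    by (simp add: F_def)
  have F_sub: "finite (F k) \<and> F k \<subseteq> I" for k
    by (induction k) (simp_all add: F_def body)
  define m where "m k = head (F k)" for k
  define D where "D k = F (Suc k) - F k" for k
  have "disjoint_family D"
    unfolding D_def by (rule disjoint_family_Suc) (simp add: F_Suc)
  moreover have "infsum (g (m k)) (I - D k) < \<delta>" for k
  proof -
    have split: "I - D k = F k \<union> (I - F (Suc k))" and disj: "F k \<inter> (I - F (Suc k)) = {}"
      using F_sub[of k] by (auto simp: D_def F_Suc)
    have "infsum (g (m k)) (I - D k) = (\<Sum>i\<in>F k. g (m k) i) + infsum (g (m k)) (I - F (Suc k))"
      unfolding split
      using F_sub[of k] disj summable_on_subset_banach[OF summable[of "m k"], of "I - F (Suc k)"]
      by (subst infsum_Un_disjoint) auto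
    also have "infsum (g (m k)) (I - F (Suc k)) \<le> infsum (g (m k)) (I - body (m k))"
      using nonneg summable_on_subset_banach[OF summable[of "m k"], of "I - body (m k)"]
        summable_on_subset_banach[OF summable[of "m k"], of "I - F (Suc k)"]
      by (intro infsum_mono_neutral) (auto simp: F_Suc m_def)
    finally show ?thesis
      using head[of "F k"] body(3)[of "m k"] F_sub[of k] by (simp add: m_def)
  qed
  ultimately show ?thesis by blast
qed

lemma norm_powr_mean_le:
  fixes w r :: "nat \<Rightarrow> 'a::real_normed_vector"
  assumes "p \<ge> 0" "\<And>k j. k \<noteq> j \<Longrightarrow> w k = 0 \<or> w j = 0"
  shows "norm ((1 / real N) *\<^sub>R (\<Sum>k<N. w k + r k)) powr p
    \<le> (1 / real N) powr p * 2 powr p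
       * ((\<Sum>k<N. norm (w k) powr p) + real N powr p * (\<Sum>k<N. norm (r k) powr p))"
proof -
  have "norm (\<Sum>k<N. r k) powr p \<le> (\<Sum>k<N. norm (r k)) powr p"
    using assms(1) by (intro powr_mono2 norm_sum) auto
  also have "\<dots> \<le> real N powr p * (\<Sum>k<N. norm (r k) powr p)"
    using sum_powr_le_card_powr[of "{..<N}" "\<lambda>k. norm (r k)" p] assms(1) by simp
  finally have r_le: "norm (\<Sum>k<N. r k) powr p \<le> real N powr p * (\<Sum>k<N. norm (r k) powr p)" .
  have "norm (\<Sum>k<N. w k + r k) powr p
      \<le> 2 powr p * (norm (\<Sum>k<N. w k) powr p + norm (\<Sum>k<N. r k) powr p)"
    unfolding sum.distrib using assms(1) by (rule norm_add_powr_le)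
  also have "norm (\<Sum>k<N. w k) powr p = (\<Sum>k<N. norm (w k) powr p)"
    using assms(2) by (intro norm_sum_powr_disjoint) auto
  finally have "norm (\<Sum>k<N. w k + r k) powr p
      \<le> 2 powr p * ((\<Sum>k<N. norm (w k) powr p) + real N powr p * (\<Sum>k<N. norm (r k) powr p))"
    using r_le by (smt (verit) mult_left_mono powr_ge_zero)
  moreover have "norm ((1 / real N) *\<^sub>R (\<Sum>k<N. w k + r k)) powr p
      = (1 / real N) powr p * norm (\<Sum>k<N. w k + r k) powr p"
    by (simp add: powr_divide)
  ultimately show ?thesis
    by (simp only: mult.assoc) (simp add: mult_left_mono)
qed

lemma infsum_norm_powr_mean_le:
  fixes V :: "nat \<Rightarrow> 'i \<Rightarrow> 'a::real_normed_vector"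
  assumes "N > 0" "p \<ge> 0" "disjoint_family D"
    and summable: "\<And>k. (\<lambda>i. norm (V k i) powr p) summable_on I"
    and bounded: "\<And>k. (\<Sum>\<^sub>\<infinity>i\<in>I. norm (V k i) powr p) \<le> B"
    and small: "\<And>k. (\<Sum>\<^sub>\<infinity>i\<in>I - D k. norm (V k i) powr p) \<le> \<eta>"
  shows "(\<Sum>\<^sub>\<infinity>i\<in>I. norm ((1 / real N) *\<^sub>R (\<Sum>k<N. V k i)) powr p)
    \<le> 2 powr p * (real N powr (1 - p) * B + real N * \<eta>)"
proof -
  define w where "w k i = (if i \<in> D k then V k i else 0)" for k i
  define r where "r k i = (if i \<in> D k then 0 else V k i)" for k i
  define W where "W k = (\<Sum>\<^sub>\<infinity>i\<in>I. norm (w k i) powr p)" for k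
  define R where "R k = (\<Sum>\<^sub>\<infinity>i\<in>I. norm (r k i) powr p)" for k
  have w_summable: "((\<lambda>i. norm (w k i) powr p) has_sum W k) I" for k
  proof -
    have "(\<lambda>i. norm (w k i) powr p) summable_on I"
      using summable[of k] by (rule summable_on_comparison_test) (auto simp: w_def)
    then show ?thesis by (simp add: W_def)
  qed
  have "W k \<le> B" for k
    using bounded[of k] infsum_mono[OF w_summable[THEN has_sum_imp_summable] summable, of k]
    by (fastforce simp: W_def w_def)
  have r_eq: "R k = (\<Sum>\<^sub>\<infinity>i\<in>I - D k. norm (V k i) powr p)" for k
    unfolding R_def by (intro infsum_cong_neutral) (auto simp: r_def)
  have r_summable: "((\<lambda>i. norm (r k i) powr p) has_sum R k) I" for k
  proof -
    have "(\<lambda>i. norm (r k i) powr p) summable_on I"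
      using summable[of k] by (rule summable_on_comparison_test) (auto simp: r_def)
    then show ?thesis by (simp add: R_def)
  qed
  define c where "c = (1 / real N) powr p * 2 powr p"
  define bound where
    "bound i = c * ((\<Sum>k<N. norm (w k i) powr p) + real N powr p * (\<Sum>k<N. norm (r k i) powr p))"
    for i
  have bound_sum: "(bound has_sum c * ((\<Sum>k<N. W k) + real N powr p * (\<Sum>k<N. R k))) I"
    unfolding bound_def
    by (intro has_sum_cmult_right has_sum_add has_sum_sum_fun w_summable r_summable) auto
  have mean_le: "norm ((1 / real N) *\<^sub>R (\<Sum>k<N. V k i)) powr p \<le> bound i" for i
  proof -
    have "(\<Sum>k<N. V k i) = (\<Sum>k<N. w k i + r k i)"
      by (intro sum.cong) (auto simp: w_def r_def)
    moreover have "norm ((1 / real N) *\<^sub>R (\<Sum>k<N. w k i + r k i)) powr p \<le> bound i"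
      unfolding bound_def c_def using \<open>p \<ge> 0\<close>
      by (rule norm_powr_mean_le)
        (use \<open>disjoint_family D\<close> in \<open>auto simp: w_def disjoint_family_on_def\<close>)
    ultimately show ?thesis by simp
  qed
  have "bound summable_on I"
    using bound_sum by (rule has_sum_imp_summable)
  moreover have "(\<lambda>i. norm ((1 / real N) *\<^sub>R (\<Sum>k<N. V k i)) powr p) summable_on I"
    using \<open>bound summable_on I\<close> by (rule summable_on_comparison_test) (use mean_le in auto)
  ultimately have "(\<Sum>\<^sub>\<infinity>i\<in>I. norm ((1 / real N) *\<^sub>R (\<Sum>k<N. V k i)) powr p) \<le> infsum bound I"
    using mean_le by (intro infsum_mono) auto
  also have "infsum bound I = c * ((\<Sum>k<N. W k) + real N powr p * (\<Sum>k<N. R k))"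
    using bound_sum by (rule infsumI)
  also have "\<dots> \<le> c * (real N * B + real N powr p * (real N * \<eta>))"
  proof -
    have "(\<Sum>k<N. W k) \<le> real N * B" "(\<Sum>k<N. R k) \<le> real N * \<eta>"
      using sum_mono[of "{..<N}" W "\<lambda>_. B"] sum_mono[of "{..<N}" R "\<lambda>_. \<eta>"] \<open>\<And>k. W k \<le> B\<close> small
      by (auto simp: r_eq)
    then show ?thesis
      unfolding c_def by (intro mult_left_mono add_mono) auto
  qed
  also have "\<dots> = 2 powr p * (real N powr (1 - p) * B + real N * \<eta>)"
  proof -
    have N_pow: "(1 / real N) powr p * real N = real N powr (1 - p)"
      using \<open>N > 0\<close> by (simp add: powr_diff powr_divide)
    have N_pow_inv: "(1 / real N) powr p * real N powr p = 1"
      using \<open>N > 0\<close> by (simp add: powr_divide)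
    have "c * (real N * B + real N powr p * (real N * \<eta>))
        = 2 powr p * B * ((1 / real N) powr p * real N)
          + 2 powr p * \<eta> * real N * ((1 / real N) powr p * real N powr p)"
      unfolding c_def by (simp add: algebra_simps)
    then show ?thesis
      unfolding N_pow N_pow_inv by (simp add: algebra_simps)
  qed
  finally show ?thesis .
qed

lemma gliding_hump:
  fixes V :: "nat \<Rightarrow> 'i \<Rightarrow> 'a::real_normed_vector"
  assumes "1 < p"
    and summable: "\<And>n. (\<lambda>i. norm (V n i) powr p) summable_on I"
    and bounded: "\<And>n. (\<Sum>\<^sub>\<infinity>i\<in>I. norm (V n i) powr p) \<le> B"
    and pointwise: "\<And>i. i \<in> I \<Longrightarrow> (\<lambda>n. V n i) \<longlonglongrightarrow> 0"
    and "\<epsilon> > 0"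
  obtains N :: nat and m :: "nat \<Rightarrow> nat"
  where "N > 0" "(\<Sum>\<^sub>\<infinity>i\<in>I. norm ((1 / real N) *\<^sub>R (\<Sum>k<N. V (m k) i)) powr p) < \<epsilon>"
proof -
  \<comment> \<open>Only here is \<open>p > 1\<close> used: the disjoint humps contribute \<open>N\<^sup>1\<^sup>-\<^sup>p\<close> to the mean.\<close>
  have N_powr: "(\<lambda>N. real N powr (1 - p)) \<longlonglongrightarrow> 0"
    using \<open>1 < p\<close> by (intro tendsto_neg_powr filterlim_real_sequentially) auto
  have "(\<lambda>N. 2 powr p * (real N powr (1 - p) * B)) \<longlonglongrightarrow> 0"
    using tendsto_mult_left[OF tendsto_mult_right[OF N_powr, of B], of "2 powr p"] by simp
  then have "\<forall>\<^sub>F N in sequentially. 2 powr p * (real N powr (1 - p) * B) < \<epsilon> / 2"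
    by (rule order_tendstoD(2)) (use \<open>\<epsilon> > 0\<close> in simp)
  then obtain N0 where N0: "\<And>N. N \<ge> N0 \<Longrightarrow> 2 powr p * (real N powr (1 - p) * B) < \<epsilon> / 2"
    unfolding eventually_sequentially by blast
  define N where "N = Suc N0"
  have "N > 0" and N: "2 powr p * (real N powr (1 - p) * B) < \<epsilon> / 2"
    using N0[of N] by (auto simp: N_def)
  define \<delta> where "\<delta> = \<epsilon> / (4 * 2 powr p * real N)"
  have "\<delta> > 0" using \<open>\<epsilon> > 0\<close> \<open>N > 0\<close> by (simp add: \<delta>_def)
  have V_powr: "(\<lambda>n. norm (V n i) powr p) \<longlonglongrightarrow> 0" if "i \<in> I" for i
    using tendsto_norm_zero[OF pointwise[OF that]] \<open>1 < p\<close>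
    by (intro tendsto_zero_powrI[where b = p]) auto
  obtain m :: "nat \<Rightarrow> nat" and D where "disjoint_family D"
    and humps: "\<And>k. (\<Sum>\<^sub>\<infinity>i\<in>I - D k. norm (V (m k) i) powr p) < \<delta>"
    using gliding_hump_selection[of "\<lambda>n i. norm (V n i) powr p" I \<delta>] summable V_powr \<open>\<delta> > 0\<close>
    by auto
  have "(\<Sum>\<^sub>\<infinity>i\<in>I. norm ((1 / real N) *\<^sub>R (\<Sum>k<N. V (m k) i)) powr p)
      \<le> 2 powr p * (real N powr (1 - p) * B + real N * \<delta>)"
    using \<open>N > 0\<close> \<open>1 < p\<close> \<open>disjoint_family D\<close> summable bounded humps
    by (intro infsum_norm_powr_mean_le) (auto intro: less_imp_le)
  also have "\<dots> < \<epsilon>"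
  proof -
    have "2 powr p * (real N * \<delta>) = \<epsilon> / 4"
      using \<open>N > 0\<close> by (simp add: \<delta>_def)
    then show ?thesis
      unfolding distrib_left using N \<open>\<epsilon> > 0\<close> by linarith
  qed
  finally show ?thesis using \<open>N > 0\<close> that by blast
qed

lemma lp_space_add:
  fixes u v :: "'g \<Rightarrow> 'k::real_normed_vector"
  assumes "u \<in> lp_space p" "v \<in> lp_space p" "p \<ge> 0"
  shows "(\<lambda>x. u x + v x) \<in> lp_space p"
proof -
  have "(\<lambda>x. 2 powr p * (norm (u x) powr p + norm (v x) powr p)) summable_on UNIV"
    using assms by (intro summable_on_cmult_right summable_on_add) (auto simp: lp_space_def)
  then have "(\<lambda>x. norm (u x + v x) powr p) summable_on UNIV"
    by (rule summable_on_comparison_test) (use assms norm_add_powr_le in auto)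
  then show ?thesis
    by (simp add: lp_space_def)
qed

lemma lp_space_scaleR:
  fixes u :: "'g \<Rightarrow> 'k::real_normed_vector"
  assumes "u \<in> lp_space p"
  shows "(\<lambda>x. c *\<^sub>R u x) \<in> lp_space p"
  using assms summable_on_cmult_right[of "\<lambda>x. norm (u x) powr p" UNIV "\<bar>c\<bar> powr p"]
  by (simp add: lp_space_def powr_mult)

lemma lp_space_sum:
  fixes u :: "'a \<Rightarrow> 'g \<Rightarrow> 'k::real_normed_vector"
  assumes "finite A" "\<And>a. a \<in> A \<Longrightarrow> u a \<in> lp_space p" "p \<ge> 0"
  shows "(\<lambda>x. \<Sum>a\<in>A. u a x) \<in> lp_space p"
  using assms
  by (induction A rule: finite_induct) (simp_all add: lp_space_add, simp add: lp_space_def)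

lemma lp_space_translate:
  fixes u :: "'g::group_add \<Rightarrow> 'k::real_normed_vector"
  assumes "u \<in> lp_space p"
  shows "(\<lambda>x. u (a + x)) \<in> lp_space p"
proof -
  have "bij_betw (\<lambda>x. a + x) UNIV UNIV"
    by (rule bij_betwI[where g = "\<lambda>x. - a + x"]) (auto simp: add.assoc[symmetric])
  then show ?thesis
    using assms summable_on_reindex_bij_betw[of "\<lambda>x. a + x" UNIV UNIV "\<lambda>y. norm (u y) powr p"]
    by (simp add: lp_space_def o_def)
qed

lemma norm_le_lp_norm:
  fixes u :: "'g \<Rightarrow> 'k::real_normed_vector"
  assumes "u \<in> lp_space p" "p > 0"
  shows "norm (u x) \<le> lp_norm p u"
proof -
  have "norm (u x) powr p \<le> (\<Sum>\<^sub>\<infinity>y. norm (u y) powr p)"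
    using assms finite_sum_le_infsum[of "\<lambda>y. norm (u y) powr p" UNIV "{x}"]
    by (auto simp: lp_space_def)
  then have "(norm (u x) powr p) powr (1 / p) \<le> (\<Sum>\<^sub>\<infinity>y. norm (u y) powr p) powr (1 / p)"
    using assms by (intro powr_mono2) auto
  then show ?thesis
    using assms by (simp add: lp_norm_def powr_powr)
qed

lemma lp_norm_powr:
  fixes u :: "'g \<Rightarrow> 'k::real_normed_vector"
  assumes "p > 0"
  shows "lp_norm p u powr p = (\<Sum>\<^sub>\<infinity>y. norm (u y) powr p)"
  using assms infsum_nonneg[of UNIV "\<lambda>y. norm (u y) powr p"]
  by (simp add: lp_norm_def powr_powr)

lemma Dp_space_edge_diff_lp:
  fixes f :: "'g::group_add \<Rightarrow> 'k::real_normed_vector"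
  assumes "f \<in> Dp_space p S" "s \<in> S"
  shows "(\<lambda>x. f (- s + x) - f x) \<in> lp_space p"
proof -
  have "range (\<lambda>x. (x, - s + x)) \<subseteq> cayley_edges S"
    using assms(2) by (auto simp: cayley_edges_def)
  moreover have "(\<lambda>(x, y). norm (f y - f x) powr p) summable_on cayley_edges S"
    using assms(1) by (simp add: Dp_space_def)
  ultimately have "(\<lambda>(x, y). norm (f y - f x) powr p) summable_on range (\<lambda>x. (x, - s + x))"
    by (rule summable_on_subset_banach[rotated])
  then show ?thesis
    by (subst (asm) summable_on_reindex) (auto simp: inj_on_def lp_space_def o_def)
qed

lemma Dp_space_translate_diff_lp:
  fixes f :: "'g::group_add \<Rightarrow> 'k::real_normed_vector"
  assumes "f \<in> Dp_space p S" "finite_symmetric_generating_set S" "p > 0"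
  shows "(\<lambda>x. f (- \<gamma> + x) - f x) \<in> lp_space p"
proof -
  \<comment> \<open>The translations with an \<open>\<ell>\<^sup>p\<close> difference form a subgroup containing \<open>S\<close>.\<close>
  define H where "H = {\<gamma>. (\<lambda>x. f (- \<gamma> + x) - f x) \<in> lp_space p}"
  have "0 \<in> H" by (simp add: H_def lp_space_def)
  moreover have "a + b \<in> H" if "a \<in> H" "b \<in> H" for a b
  proof -
    have "(\<lambda>x. (f (- b + (- a + x)) - f (- a + x)) + (f (- a + x) - f x)) \<in> lp_space p"
      using that assms(3) lp_space_translate[of "\<lambda>x. f (- b + x) - f x" p "- a"]
      by (intro lp_space_add) (auto simp: H_def)
    moreover have "- (a + b) + x = - b + (- a + x)" for x
      by (metis add.assoc minus_add)
    ultimately show ?thesis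
      unfolding H_def mem_Collect_eq by (simp only:) simp
  qed
  moreover have "- a \<in> H" if "a \<in> H" for a
    using that lp_space_scaleR[OF lp_space_translate[of "\<lambda>x. f (- a + x) - f x" p a], of "- 1"]
    by (simp add: H_def add.assoc[symmetric])
  moreover have "S \<subseteq> H"
    using Dp_space_edge_diff_lp[OF assms(1)] by (auto simp: H_def)
  ultimately have "generated_subgroup S \<subseteq> H"
    unfolding generated_subgroup_def by blast
  then show ?thesis
    using assms(2) by (auto simp: finite_symmetric_generating_set_def H_def)
qed

lemma Dp_norm_lessI:
  fixes h :: "'g::group_add \<Rightarrow> 'k::real_normed_vector"
  assumes "h 0 = 0" "(\<Sum>\<^sub>\<infinity>(x, y)\<in>cayley_edges S. norm (h y - h x) powr p) < \<eta> powr p"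
    and "p > 0" "\<eta> > 0"
  shows "Dp_norm p S h < \<eta>"
proof -
  have "Dp_norm p S h = (\<Sum>\<^sub>\<infinity>(x, y)\<in>cayley_edges S. norm (h y - h x) powr p) powr (1 / p)"
    using assms(1) by (simp add: Dp_norm_def)
  also have "\<dots> < (\<eta> powr p) powr (1 / p)"
    using assms(2,3) by (intro powr_less_mono2) (auto intro: infsum_nonneg)
  also have "\<dots> = \<eta>"
    using assms(3,4) by (simp add: powr_powr)
  finally show ?thesis .
qed

lemma conv_eq_sum_superset:
  assumes "finite A" "{\<gamma>. \<xi> \<gamma> \<noteq> 0} \<subseteq> A"
  shows "conv \<xi> f \<eta> = (\<Sum>\<gamma>\<in>A. \<xi> \<gamma> *\<^sub>R f (- \<gamma> + \<eta>))"
  unfolding conv_def using assms by (intro sum.mono_neutral_left) auto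

lemma conv_diff_right: "conv \<xi> (\<lambda>x. f x - g x) \<eta> = conv \<xi> f \<eta> - conv \<xi> g \<eta>"
  unfolding conv_def by (simp add: sum_subtractf scaleR_diff_right)

lemma conv_dirac_diff: "conv (\<lambda>x. dirac s x - dirac 0 x) \<xi> = (\<lambda>\<gamma>. \<xi> (- s + \<gamma>) - \<xi> \<gamma>)"
proof
  fix \<gamma>
  have "conv (\<lambda>x. dirac s x - dirac 0 x) \<xi> \<gamma>
      = (\<Sum>\<beta>\<in>{s, 0}. (dirac s \<beta> - dirac 0 \<beta>) *\<^sub>R \<xi> (- \<beta> + \<gamma>))"
    by (rule conv_eq_sum_superset) (auto simp: dirac_def)
  then show "conv (\<lambda>x. dirac s x - dirac 0 x) \<xi> \<gamma> = \<xi> (- s + \<gamma>) - \<xi> \<gamma>"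
    by (cases "s = 0") (auto simp: dirac_def)
qed

lemma finite_support_translate_diff:
  fixes \<xi> :: "'g::group_add \<Rightarrow> real"
  assumes "finite {\<gamma>. \<xi> \<gamma> \<noteq> 0}"
  shows "finite {\<gamma>. \<xi> (- s + \<gamma>) - \<xi> \<gamma> \<noteq> 0}"
proof (rule finite_subset)
  show "{\<gamma>. \<xi> (- s + \<gamma>) - \<xi> \<gamma> \<noteq> 0} \<subseteq> {\<gamma>. \<xi> \<gamma> \<noteq> 0} \<union> (\<lambda>a. s + a) ` {\<gamma>. \<xi> \<gamma> \<noteq> 0}"
  proof
    fix \<gamma> assume "\<gamma> \<in> {\<gamma>. \<xi> (- s + \<gamma>) - \<xi> \<gamma> \<noteq> 0}"
    moreover have "\<gamma> = s + (- s + \<gamma>)" by (simp add: add.assoc[symmetric])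
    ultimately show "\<gamma> \<in> {\<gamma>. \<xi> \<gamma> \<noteq> 0} \<union> (\<lambda>a. s + a) ` {\<gamma>. \<xi> \<gamma> \<noteq> 0}" by force
  qed
qed (use assms in auto)

lemma conv_translate_diff:
  fixes f :: "'g::group_add \<Rightarrow> 'k::real_vector"
  assumes "finite {\<gamma>. \<xi> \<gamma> \<noteq> 0}"
  shows "conv (\<lambda>\<gamma>. \<xi> (- s + \<gamma>) - \<xi> \<gamma>) f x = conv \<xi> f (- s + x) - conv \<xi> f x"
proof -
  define A where "A = {\<gamma>. \<xi> \<gamma> \<noteq> 0} \<union> (\<lambda>a. s + a) ` {\<gamma>. \<xi> \<gamma> \<noteq> 0}"
  have "finite A" using assms by (simp add: A_def)
  have A_shift: "A = (\<lambda>\<beta>. s + \<beta>) ` ((\<lambda>\<gamma>. - s + \<gamma>) ` A)"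
    by (simp add: image_image add.assoc[symmetric])
  have "conv (\<lambda>\<gamma>. \<xi> (- s + \<gamma>) - \<xi> \<gamma>) f x
      = (\<Sum>\<gamma>\<in>A. \<xi> (- s + \<gamma>) *\<^sub>R f (- \<gamma> + x)) - (\<Sum>\<gamma>\<in>A. \<xi> \<gamma> *\<^sub>R f (- \<gamma> + x))"
    using \<open>finite A\<close> finite_support_translate_diff[OF assms, of s]
    by (subst conv_eq_sum_superset[of A])
       (auto simp: A_def scaleR_diff_left sum_subtractf add.assoc[symmetric]
         intro: image_eqI[of _ _ "- s + _"])
  also have "(\<Sum>\<gamma>\<in>A. \<xi> (- s + \<gamma>) *\<^sub>R f (- \<gamma> + x))
      = (\<Sum>\<beta>\<in>(\<lambda>\<gamma>. - s + \<gamma>) ` A. \<xi> \<beta> *\<^sub>R f (- \<beta> + (- s + x)))"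
    by (subst A_shift, subst sum.reindex) (auto simp: inj_on_def minus_add add.assoc[symmetric])
  also have "\<dots> = conv \<xi> f (- s + x)"
  proof (rule conv_eq_sum_superset[symmetric])
    show "{\<beta>. \<xi> \<beta> \<noteq> 0} \<subseteq> (\<lambda>\<gamma>. - s + \<gamma>) ` A"
    proof
      fix \<beta> assume "\<beta> \<in> {\<beta>. \<xi> \<beta> \<noteq> 0}"
      then have "s + \<beta> \<in> A" by (auto simp: A_def)
      moreover have "\<beta> = - s + (s + \<beta>)" by (simp add: add.assoc[symmetric])
      ultimately show "\<beta> \<in> (\<lambda>\<gamma>. - s + \<gamma>) ` A" by blast
    qed
  qed (use \<open>finite A\<close> in simp)
  also have "(\<Sum>\<gamma>\<in>A. \<xi> \<gamma> *\<^sub>R f (- \<gamma> + x)) = conv \<xi> f x"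
    using \<open>finite A\<close> by (intro conv_eq_sum_superset[symmetric]) (auto simp: A_def)
  finally show ?thesis .
qed

lemma norm_conv_le:
  fixes g :: "'g::group_add \<Rightarrow> 'k::real_normed_vector"
  assumes "finite {\<gamma>. c \<gamma> \<noteq> 0}" "\<And>x. norm (g x) \<le> M"
  shows "norm (conv c g x) \<le> M * (\<Sum>\<^sub>\<infinity>\<gamma>. \<bar>c \<gamma>\<bar>)"
proof -
  have "norm (conv c g x) \<le> (\<Sum>\<gamma>\<in>{\<gamma>. c \<gamma> \<noteq> 0}. \<bar>c \<gamma>\<bar> * M)"
    unfolding conv_def using assms(2)
    by (intro order.trans[OF norm_sum] sum_mono) (auto intro: mult_left_mono)
  also have "\<dots> = M * (\<Sum>\<^sub>\<infinity>\<gamma>. \<bar>c \<gamma>\<bar>)"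
    using assms(1) infsum_cong_neutral[of "{\<gamma>. c \<gamma> \<noteq> 0}" UNIV "\<lambda>\<gamma>. \<bar>c \<gamma>\<bar>"]
    by (simp add: sum_distrib_left mult.commute)
  finally show ?thesis .
qed

lemma diff_conv_lp_space:
  fixes f :: "'g::group_add \<Rightarrow> 'k::real_normed_vector"
  assumes "f \<in> Dp_space p S" "finite_symmetric_generating_set S" "p > 0"
    and "finitely_supported_prob \<xi>"
  shows "(\<lambda>x. f x - conv \<xi> f x) \<in> lp_space p"
proof -
  define A where "A = {\<gamma>. \<xi> \<gamma> \<noteq> 0}"
  have "finite A" "(\<Sum>\<gamma>\<in>A. \<xi> \<gamma>) = 1"
    using assms(4) by (auto simp: finitely_supported_prob_def A_def)
  then have "f x - conv \<xi> f x = (\<Sum>\<gamma>\<in>A. (- \<xi> \<gamma>) *\<^sub>R (f (- \<gamma> + x) - f x))" for x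
    by (simp add: conv_def A_def scaleR_sum_left[symmetric] sum_subtractf scaleR_diff_right
        flip: sum_negf)
  then show ?thesis
    using assms \<open>finite A\<close>
    by (simp only:) (intro lp_space_sum lp_space_scaleR Dp_space_translate_diff_lp; auto)
qed

definition trunc :: "real \<Rightarrow> 'a::real_normed_vector \<Rightarrow> 'a" where
  "trunc M z = (if norm z \<le> M then z else (M / norm z) *\<^sub>R z)"

lemma norm_trunc_le: "M \<ge> 0 \<Longrightarrow> norm (trunc M z) \<le> M"
  by (auto simp: trunc_def)

lemma norm_shrink_diff_le:
  fixes z w :: "'a::real_normed_vector"
  assumes "M \<ge> 0" "norm z > M" "norm w \<le> M"
  shows "norm ((M / norm z) *\<^sub>R z - w) \<le> 2 * norm (z - w)"
proof -
  have "norm z > 0" using assms by linarith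
  have "norm ((M / norm z) *\<^sub>R z - w) \<le> norm ((M / norm z - 1) *\<^sub>R z) + norm (z - w)"
    using norm_triangle_ineq[of "(M / norm z - 1) *\<^sub>R z" "z - w"] by (simp add: algebra_simps)
  also have "norm ((M / norm z - 1) *\<^sub>R z) = norm z - M"
    using \<open>norm z > 0\<close> assms by (simp add: abs_if field_simps)
  also have "norm z - M \<le> norm (z - w)"
    using assms norm_triangle_ineq2[of z w] by linarith
  finally show ?thesis by simp
qed

lemma norm_shrink_shrink_diff_le:
  fixes z w :: "'a::real_normed_vector"
  assumes "M \<ge> 0" "norm z > M" "norm w > M"
  shows "norm ((M / norm z) *\<^sub>R z - (M / norm w) *\<^sub>R w) \<le> 2 * norm (z - w)"
proof -
  define a b where "a = norm z" and "b = norm w"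
  have "a > 0" "a > M" "b > 0" using assms by (auto simp: a_def b_def)
  have "(M / a) *\<^sub>R z - (M / b) *\<^sub>R w = (M / a) *\<^sub>R (z - w) + (M / a - M / b) *\<^sub>R w"
    by (simp add: algebra_simps)
  then have "norm ((M / a) *\<^sub>R z - (M / b) *\<^sub>R w)
      \<le> norm ((M / a) *\<^sub>R (z - w)) + norm ((M / a - M / b) *\<^sub>R w)"
    by (metis norm_triangle_ineq)
  also have "norm ((M / a) *\<^sub>R (z - w)) = (M / a) * norm (z - w)"
    using \<open>a > 0\<close> assms(1) by simp
  also have "norm ((M / a - M / b) *\<^sub>R w) = (M / a) * \<bar>b - a\<bar>"
  proof -
    have "M / a - M / b = (M / a) * ((b - a) / b)"
      using \<open>a > 0\<close> \<open>b > 0\<close> by (simp add: field_simps)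
    then show ?thesis
      using \<open>a > 0\<close> \<open>b > 0\<close> assms(1) by (simp add: abs_mult b_def)
  qed
  also have "(M / a) * norm (z - w) + (M / a) * \<bar>b - a\<bar> \<le> (M / a) * (2 * norm (z - w))"
    using \<open>a > 0\<close> assms(1) norm_triangle_ineq3[of w z]
    by (subst distrib_left[symmetric], intro mult_left_mono)
      (auto simp: a_def b_def norm_minus_commute)
  also have "\<dots> \<le> 2 * norm (z - w)"
    using \<open>a > M\<close> \<open>a > 0\<close> assms(1) by (intro mult_left_le_one_le) auto
  finally show ?thesis by (simp add: a_def b_def)
qed

lemma trunc_lipschitz:
  fixes z w :: "'a::real_normed_vector"
  assumes "M \<ge> 0"
  shows "norm (trunc M z - trunc M w) \<le> 2 * norm (z - w)"
  using norm_shrink_diff_le[OF assms, of z w] norm_shrink_diff_le[OF assms, of w z]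
    norm_shrink_shrink_diff_le[OF assms, of z w]
  by (auto simp: trunc_def norm_minus_commute not_le)

lemma norm_diff_sub_trunc_le:
  fixes z w :: "'a::real_normed_vector"
  assumes "M \<ge> 0"
  shows "norm ((z - trunc M z) - (w - trunc M w)) \<le> 3 * norm (z - w)"
proof -
  have "norm ((z - trunc M z) - (w - trunc M w)) \<le> norm (z - w) + norm (trunc M z - trunc M w)"
    using norm_triangle_ineq4[of "z - w" "trunc M z - trunc M w"] by (simp add: algebra_simps)
  then show ?thesis
    using trunc_lipschitz[OF assms, of z w] by simp
qed

lemma Dp_space_bounded_approx:
  fixes f :: "'g::group_add \<Rightarrow> 'k::real_normed_vector"
  assumes "f \<in> Dp_space p S" "p > 0" "\<eta> > 0"
  obtains g M where "\<And>x. norm (g x) \<le> M" "(\<lambda>x. f x - g x) \<in> Dp_space p S"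
    "Dp_norm p S (\<lambda>x. f x - g x) < \<eta>"
proof -
  define E where "E = cayley_edges S"
  define d where "d = (\<lambda>(x, y). norm (f y - f x) powr p)"
  have "d summable_on E" using assms(1) by (simp add: Dp_space_def d_def E_def)
  then obtain G where G: "finite G" "G \<subseteq> E" "infsum d (E - G) < \<eta> powr p / 3 powr p"
    using infsum_tail_approximation[of d E "\<eta> powr p / 3 powr p"] assms by auto
  \<comment> \<open>\<open>M\<close> exceeds \<open>|f|\<close> at \<open>0\<close> and at the endpoints of the edges in \<open>G\<close>,
    so \<open>f - trunc M f\<close> vanishes there.\<close>
  define M where "M = norm (f 0) + (\<Sum>e\<in>G. norm (f (fst e)) + norm (f (snd e)))"
  have M_ge: "norm (f 0) \<le> M"
    by (simp add: M_def sum_nonneg)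
  have M_ge_G: "norm (f (fst e)) \<le> M \<and> norm (f (snd e)) \<le> M" if "e \<in> G" for e
  proof -
    have "norm (f (fst e)) + norm (f (snd e)) \<le> (\<Sum>e\<in>G. norm (f (fst e)) + norm (f (snd e)))"
      using that G(1) by (intro member_le_sum) auto
    then show ?thesis
      unfolding M_def
      using norm_ge_zero[of "f 0"] norm_ge_zero[of "f (fst e)"] norm_ge_zero[of "f (snd e)"]
      by linarith
  qed
  have "M \<ge> 0" using M_ge norm_ge_zero order_trans by blast
  define h where "h x = f x - trunc M (f x)" for x
  have h_zero: "h z = 0" if "norm (f z) \<le> M" for z
    using that by (simp add: h_def trunc_def)
  define dh where "dh = (\<lambda>(x, y). norm (h y - h x) powr p)"
  have dh_le: "dh e \<le> 3 powr p * d e" for e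
    using norm_diff_sub_trunc_le[OF \<open>M \<ge> 0\<close>, of "f (snd e)" "f (fst e)"] assms(2)
      powr_mono2[of p "norm (h (snd e) - h (fst e))" "3 * norm (f (snd e) - f (fst e))"]
    by (simp add: dh_def d_def h_def powr_mult case_prod_beta')
  have dh_summable: "dh summable_on E"
    using summable_on_cmult_right[OF \<open>d summable_on E\<close>, of "3 powr p"]
    by (rule summable_on_comparison_test) (use dh_le in \<open>auto simp: dh_def\<close>)
  have "infsum dh E = infsum dh (E - G)"
    using M_ge_G h_zero by (intro infsum_cong_neutral) (auto simp: dh_def)
  also have "\<dots> \<le> 3 powr p * infsum d (E - G)"
    using dh_le summable_on_subset_banach[OF dh_summable, of "E - G"]
      summable_on_cmult_right[OF summable_on_subset_banach[OF \<open>d summable_on E\<close>, of "E - G"],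
        of "3 powr p"]
    by (subst infsum_cmult_right'[symmetric]) (intro infsum_mono; auto)
  also have "\<dots> < \<eta> powr p"
    using G(3) by (simp add: field_simps)
  finally have "infsum dh E < \<eta> powr p" .
  then have "Dp_norm p S h < \<eta>"
    using h_zero[OF M_ge] assms(2,3) by (intro Dp_norm_lessI) (simp_all add: dh_def E_def)
  moreover have "h \<in> Dp_space p S"
    using dh_summable by (simp add: Dp_space_def dh_def E_def)
  moreover have "norm (trunc M (f x)) \<le> M" for x
    using norm_trunc_le[OF \<open>M \<ge> 0\<close>] .
  ultimately show ?thesis
    using that[of "\<lambda>x. trunc M (f x)" M] unfolding h_def[abs_def] by blast
qed

lemma conv_tendsto_zero:
  fixes f :: "'g::group_add \<Rightarrow> 'k::real_normed_vector" and c :: "nat \<Rightarrow> 'g \<Rightarrow> real"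
  assumes f: "f \<in> Dp_space p S" and "p > 0" "K > 0"
    and support: "\<And>n. finite {\<gamma>. c n \<gamma> \<noteq> 0}"
    and l1: "(\<lambda>n. \<Sum>\<^sub>\<infinity>\<gamma>. \<bar>c n \<gamma>\<bar>) \<longlonglongrightarrow> 0"
    and bounded: "\<And>n (F :: 'g \<Rightarrow> 'k). F \<in> Dp_space p S \<Longrightarrow>
      conv (c n) F \<in> lp_space p \<and> lp_norm p (conv (c n) F) \<le> K * Dp_norm p S F"
  shows "(\<lambda>n. conv (c n) f x) \<longlonglongrightarrow> 0"
proof (rule LIMSEQ_I)
  fix r :: real assume "r > 0"
  \<comment> \<open>Split \<open>f\<close> into a bounded part, on which \<open>\<ell>\<^sup>1\<close>-convergence acts, and a part small in \<open>D\<^sup>p\<close>.\<close>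
  obtain g M where g_bounded: "\<And>x. norm (g x) \<le> M"
    and rest: "(\<lambda>x. f x - g x) \<in> Dp_space p S" "Dp_norm p S (\<lambda>x. f x - g x) < r / (2 * K)"
    using Dp_space_bounded_approx[OF f \<open>p > 0\<close>, of "r / (2 * K)"] \<open>r > 0\<close> \<open>K > 0\<close> by auto
  have rest_small: "norm (conv (c n) (\<lambda>x. f x - g x) x) < r / 2" for n
  proof -
    have "norm (conv (c n) (\<lambda>x. f x - g x) x) \<le> K * Dp_norm p S (\<lambda>x. f x - g x)"
      using bounded[OF rest(1), of n] norm_le_lp_norm[of "conv (c n) (\<lambda>x. f x - g x)" p x] \<open>p > 0\<close>
      by auto
    also have "\<dots> < K * (r / (2 * K))"
      using rest(2) \<open>K > 0\<close> by (intro mult_strict_left_mono)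
    also have "\<dots> = r / 2"
      using \<open>K > 0\<close> by simp
    finally show ?thesis .
  qed
  have "(\<lambda>n. M * (\<Sum>\<^sub>\<infinity>\<gamma>. \<bar>c n \<gamma>\<bar>)) \<longlonglongrightarrow> M * 0"
    using l1 by (rule tendsto_mult_left)
  then have "\<forall>\<^sub>F n in sequentially. M * (\<Sum>\<^sub>\<infinity>\<gamma>. \<bar>c n \<gamma>\<bar>) < r / 2"
    by (rule order_tendstoD(2)) (use \<open>r > 0\<close> in simp)
  then obtain n0 where n0: "\<And>n. n \<ge> n0 \<Longrightarrow> M * (\<Sum>\<^sub>\<infinity>\<gamma>. \<bar>c n \<gamma>\<bar>) < r / 2"
    unfolding eventually_sequentially by blast
  have "norm (conv (c n) f x) < r" if "n \<ge> n0" for n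
  proof -
    have "conv (c n) f x = conv (c n) g x + conv (c n) (\<lambda>x. f x - g x) x"
      by (simp add: conv_diff_right)
    then have "norm (conv (c n) f x) \<le> norm (conv (c n) g x) + norm (conv (c n) (\<lambda>x. f x - g x) x)"
      by (metis norm_triangle_ineq)
    moreover have "norm (conv (c n) g x) \<le> M * (\<Sum>\<^sub>\<infinity>\<gamma>. \<bar>c n \<gamma>\<bar>)"
      by (rule norm_conv_le) (use support g_bounded in auto)
    ultimately show ?thesis
      using n0[OF that] rest_small[of n] by linarith
  qed
  then show "\<exists>n0. \<forall>n\<ge>n0. norm (conv (c n) f x - 0) < r"
    by auto
qed

lemma has_sum_cayley_edges:
  fixes F :: "'g::group_add \<times> 'g \<Rightarrow> 'a::topological_comm_monoid_add"
  assumes "finite S" "\<And>s. s \<in> S \<Longrightarrow> ((\<lambda>x. F (x, - s + x)) has_sum a s) UNIV"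
  shows "(F has_sum (\<Sum>s\<in>S. a s)) (cayley_edges S)"
proof -
  have edges: "cayley_edges S = (\<Union>s\<in>S. range (\<lambda>x. (x, - s + x)))"
    by (auto simp: cayley_edges_def)
  have "(F has_sum a s) (range (\<lambda>x. (x, - s + x)))" if "s \<in> S" for s
    using assms(2)[OF that] by (subst has_sum_reindex) (auto simp: inj_on_def o_def)
  then show ?thesis
    unfolding edges using assms(1) by (intro sum_has_sum) auto
qed

lemma conv_gradient_energy:
  fixes f :: "'g::group_add \<Rightarrow> 'k::real_normed_vector"
  assumes "finite S" "finite {\<gamma>. \<xi> \<gamma> \<noteq> 0}" "p > 0"
    and bounded: "\<And>s. s \<in> S \<Longrightarrow> conv (\<lambda>\<gamma>. \<xi> (- s + \<gamma>) - \<xi> \<gamma>) f \<in> lp_space p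
      \<and> lp_norm p (conv (\<lambda>\<gamma>. \<xi> (- s + \<gamma>) - \<xi> \<gamma>) f) \<le> C"
  shows "(\<lambda>(x, y). norm (conv \<xi> f y - conv \<xi> f x) powr p) summable_on cayley_edges S"
    and "(\<Sum>\<^sub>\<infinity>(x, y)\<in>cayley_edges S. norm (conv \<xi> f y - conv \<xi> f x) powr p)
      \<le> real (card S) * C powr p"
proof -
  define a where "a s = lp_norm p (conv (\<lambda>\<gamma>. \<xi> (- s + \<gamma>) - \<xi> \<gamma>) f) powr p" for s
  have "((\<lambda>x. norm (conv \<xi> f (- s + x) - conv \<xi> f x) powr p) has_sum a s) UNIV" if "s \<in> S" for s
    using bounded[OF that] unfolding a_def lp_norm_powr[OF \<open>p > 0\<close>]
    by (simp add: conv_translate_diff[OF assms(2)] lp_space_def)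
  then have energy: "((\<lambda>(x, y). norm (conv \<xi> f y - conv \<xi> f x) powr p)
      has_sum (\<Sum>s\<in>S. a s)) (cayley_edges S)"
    by (intro has_sum_cayley_edges[OF assms(1)]) simp
  then show "(\<lambda>(x, y). norm (conv \<xi> f y - conv \<xi> f x) powr p) summable_on cayley_edges S"
    by (rule has_sum_imp_summable)
  have "(\<Sum>s\<in>S. a s) \<le> (\<Sum>s\<in>S. C powr p)"
    using bounded \<open>p > 0\<close> by (intro sum_mono) (auto simp: a_def lp_norm_def intro: powr_mono2)
  then show "(\<Sum>\<^sub>\<infinity>(x, y)\<in>cayley_edges S. norm (conv \<xi> f y - conv \<xi> f x) powr p)
      \<le> real (card S) * C powr p"
    using infsumI[OF energy] by simp
qed

lemma lp_plus_const_closureI: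
  fixes f :: "'g::group_add \<Rightarrow> 'k::real_normed_vector"
  assumes "f \<in> Dp_space p S" "p > 0"
    and approx: "\<And>\<epsilon>. \<epsilon> > 0 \<Longrightarrow> \<exists>u. (\<lambda>x. f x - u x) \<in> lp_space p
      \<and> (\<Sum>\<^sub>\<infinity>(x, y)\<in>cayley_edges S. norm (u y - u x) powr p) < \<epsilon>"
  shows "f \<in> lp_plus_const_closure p S"
proof -
  have "\<exists>g\<in>lp_space p. \<exists>c. Dp_norm p S (\<lambda>x. f x - (g x + c)) < \<epsilon>" if "\<epsilon> > 0" for \<epsilon>
  proof -
    obtain u where u: "(\<lambda>x. f x - u x) \<in> lp_space p"
      "(\<Sum>\<^sub>\<infinity>(x, y)\<in>cayley_edges S. norm (u y - u x) powr p) < \<epsilon> powr p"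
      using approx[of "\<epsilon> powr p"] \<open>\<epsilon> > 0\<close> by auto
    \<comment> \<open>With \<open>g = f - u\<close> and \<open>c = u(e)\<close> the value at \<open>e\<close> drops out of the \<open>D\<^sup>p\<close>-norm.\<close>
    have "Dp_norm p S (\<lambda>x. f x - ((f x - u x) + u 0)) < \<epsilon>"
      using u(2) \<open>p > 0\<close> \<open>\<epsilon> > 0\<close> by (intro Dp_norm_lessI) simp_all
    then show ?thesis
      using u(1) by (intro bexI[of _ "\<lambda>x. f x - u x"] exI[of _ "u 0"])
  qed
  then show ?thesis
    using assms(1) by (simp add: lp_plus_const_closure_def)
qed

lemma diff_mean_conv_lp_space:
  fixes f :: "'g::group_add \<Rightarrow> 'k::real_normed_vector"
  assumes "f \<in> Dp_space p S" "finite_symmetric_generating_set S" "p > 0" "N > 0"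
    and "\<And>k. finitely_supported_prob (\<xi> k)"
  shows "(\<lambda>x. f x - (1 / real N) *\<^sub>R (\<Sum>k<N. conv (\<xi> k) f x)) \<in> lp_space p"
proof -
  have "f x - (1 / real N) *\<^sub>R (\<Sum>k<N. conv (\<xi> k) f x)
      = (1 / real N) *\<^sub>R (\<Sum>k<N. f x - conv (\<xi> k) f x)" for x
    using \<open>N > 0\<close> by (simp add: sum_subtractf scaleR_diff_right sum_constant_scaleR)
  then show ?thesis
    using assms by (simp only:) (intro lp_space_scaleR lp_space_sum diff_conv_lp_space; auto)
qed

lemma Dp_space_in_lp_plus_const_closure:
  fixes f :: "'g::group_add \<Rightarrow> 'k::real_normed_vector" and \<xi> :: "nat \<Rightarrow> 'g \<Rightarrow> real"
  assumes f: "f \<in> Dp_space p S"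
    and "finite_symmetric_generating_set S" "1 < p" "K > 0"
    and prob: "\<And>n. finitely_supported_prob (\<xi> n)"
    and l1: "\<And>\<gamma>. (\<lambda>n. \<Sum>\<^sub>\<infinity>x. \<bar>\<xi> n (- \<gamma> + x) - \<xi> n x\<bar>) \<longlonglongrightarrow> 0"
    and bounded: "\<And>s n (F :: 'g \<Rightarrow> 'k). s \<in> S \<Longrightarrow> F \<in> Dp_space p S \<Longrightarrow>
      conv (\<lambda>\<gamma>. \<xi> n (- s + \<gamma>) - \<xi> n \<gamma>) F \<in> lp_space p
      \<and> lp_norm p (conv (\<lambda>\<gamma>. \<xi> n (- s + \<gamma>) - \<xi> n \<gamma>) F) \<le> K * Dp_norm p S F"
  shows "f \<in> lp_plus_const_closure p S"
proof (rule lp_plus_const_closureI[OF f])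
  show "p > 0" using \<open>1 < p\<close> by simp
  have "finite S" using assms(2) by (simp add: finite_symmetric_generating_set_def)
  have support: "finite {\<gamma>. \<xi> n \<gamma> \<noteq> 0}" for n
    using prob[of n] by (simp add: finitely_supported_prob_def)
  fix \<epsilon> :: real assume "\<epsilon> > 0"
  define V where "V n e = conv (\<xi> n) f (snd e) - conv (\<xi> n) f (fst e)" for n e
  have energy: "(\<lambda>e. norm (V n e) powr p) summable_on cayley_edges S"
    "(\<Sum>\<^sub>\<infinity>e\<in>cayley_edges S. norm (V n e) powr p) \<le> real (card S) * (K * Dp_norm p S f) powr p"
    for n
    using conv_gradient_energy[OF \<open>finite S\<close> support \<open>p > 0\<close> bounded[OF _ f]]
    by (simp_all add: V_def case_prod_beta')
  have pointwise: "(\<lambda>n. V n e) \<longlonglongrightarrow> 0" if edge: "e \<in> cayley_edges S" for e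
  proof -
    obtain x s where "e = (x, - s + x)" "s \<in> S"
      using edge by (cases e) (auto simp: cayley_edges_def)
    moreover have "finite {\<gamma>. \<xi> n (- s + \<gamma>) - \<xi> n \<gamma> \<noteq> 0}" for n
      using finite_support_translate_diff[OF support] .
    ultimately show ?thesis
      using conv_tendsto_zero[OF f \<open>p > 0\<close> \<open>K > 0\<close> _ l1[of s] bounded[OF \<open>s \<in> S\<close>]]
      by (simp add: V_def conv_translate_diff[OF support])
  qed
  obtain N m where "N > 0"
    and small: "(\<Sum>\<^sub>\<infinity>e\<in>cayley_edges S. norm ((1 / real N) *\<^sub>R (\<Sum>k<N. V (m k) e)) powr p) < \<epsilon>"
    using gliding_hump[OF \<open>1 < p\<close> energy pointwise \<open>\<epsilon> > 0\<close>] by blast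
  define u where "u x = (1 / real N) *\<^sub>R (\<Sum>k<N. conv (\<xi> (m k)) f x)" for x
  have "(\<lambda>x. f x - u x) \<in> lp_space p"
    unfolding u_def using f assms(2) \<open>p > 0\<close> \<open>N > 0\<close> prob by (rule diff_mean_conv_lp_space)
  moreover have "u y - u x = (1 / real N) *\<^sub>R (\<Sum>k<N. V (m k) (x, y))" for x y
    by (simp add: u_def V_def scaleR_diff_right sum_subtractf)
  ultimately show "\<exists>u. (\<lambda>x. f x - u x) \<in> lp_space p
      \<and> (\<Sum>\<^sub>\<infinity>(x, y)\<in>cayley_edges S. norm (u y - u x) powr p) < \<epsilon>"
    using small by (auto simp: case_prod_beta')
qed

theorem lemma3p3:
  fixes S :: "'g::group_add set" and p :: real and K :: real
    and \<xi> :: "nat \<Rightarrow> 'g \<Rightarrow> real"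
  assumes "amenable_group TYPE('g)"
    and "finite_symmetric_generating_set S"
    and "1 < p"
    and "\<And>n. finitely_supported_prob (\<xi> n)"
    and "\<And>\<gamma>. (\<lambda>n. \<Sum>\<^sub>\<infinity>x. \<bar>\<xi> n (- \<gamma> + x) - \<xi> n x\<bar>) \<longlonglongrightarrow> 0"
    and "K > 0"
    and "\<And>s n (f :: 'g \<Rightarrow> 'k::{real_normed_field, banach}). s \<in> S \<Longrightarrow> f \<in> Dp_space p S \<Longrightarrow>
           conv (conv (\<lambda>x. dirac s x - dirac 0 x) (\<xi> n)) f \<in> lp_space p \<and>
           lp_norm p (conv (conv (\<lambda>x. dirac s x - dirac 0 x) (\<xi> n)) f) \<le> K * Dp_norm p S f"
  shows "reduced_lp_cohomology_vanishes p S TYPE('k)"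
proof -
  have bounded: "conv (\<lambda>\<gamma>. \<xi> n (- s + \<gamma>) - \<xi> n \<gamma>) F \<in> lp_space p
      \<and> lp_norm p (conv (\<lambda>\<gamma>. \<xi> n (- s + \<gamma>) - \<xi> n \<gamma>) F) \<le> K * Dp_norm p S F"
    if "s \<in> S" "F \<in> Dp_space p S" for s n and F :: "'g \<Rightarrow> 'k"
    using assms(7)[OF that] by (simp add: conv_dirac_diff)
  have "f \<in> lp_plus_const_closure p S" if "f \<in> Dp_space p S" for f :: "'g \<Rightarrow> 'k"
    using Dp_space_in_lp_plus_const_closure[OF that assms(2,3,6,4,5) bounded] .
  then show ?thesis
    by (auto simp: reduced_lp_cohomology_vanishes_def lp_plus_const_closure_def)
qed

end
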